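(* Let $(S,\mathcal B_S,\mu)$ be a standard Lebesgue space with $\sigma$-finite measure $\mu$, and let $f,g:S\to[0,\infty)$ be measurable with $\int_S f\,d\mu=\int_S g\,d\mu=1$. Let $(X,Y)$ be a random vector with \[ \mathbb P(X\le x,Y\le y)=\exp\Big\{-\int_S \max\Big(\frac{f(s)}{x},\frac{g(s)}{y}\Big)\mu(ds)\Big\},\qquad x,y>0 . \] For $t\ge 0$ let $D_t=\{s\in S: f(s)/g(s)\le t\}$ and $E_t=S\setminus D_t$ (with the convention $1/0=\infty$), and for measurable $h$ and $A\subset S$ write $\|h\|_A=\int_A|h(s)|\mu(ds)$. Then for all $t\ge 0$ and $u\ge 0$, \[ \mathbb P(X/Y\le t,\;Y>u)=\Big(1+\frac{\|f\|_{E_t}}{t\,\|g\|_{D_t}}\Big)^{-1}\Big[1-\exp\Big(-\frac{\|g\|_{D_t}+t^{-1}\|f\|_{E_t}}{u}\Big)\Big]. \] In particular, when $\mu(E_t)=0$, we have $\mathbb P(X/Y>t)=0$.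
   Context: $(X,Y)$ is a standard bivariate $1$-Fréchet random vector given through its spectral functions $f,g$ (equivalently $(X,Y)=(\int^e_S f\,dM,\int^e_S g\,dM)$ for a $1$-Fréchet random sup-measure $M$ with control measure $\mu$). Conventions: $1/0=\infty$; for $u=0$, $\exp(-c/0)=0$. *)

theory Defs
  imports "HOL-Probability.Probability"
begin

text \<open>Right-hand side of the formula, with a = norm of g on D_t, b = norm of f on E_t.
  The factor (1 + b/(t a))^(-1) is written t a / (t a + b) (equal under 1/0 = infinity,
  since t a + b > 0 always holds under the hypotheses); the bracket
  1 - exp(-(a + b/t)/u) equals 1 when u = 0 (convention exp(-c/0) = 0) or t = 0 (b/0 = infinity).\<close>
definition ratio_rhs :: "real \<Rightarrow> real \<Rightarrow> real \<Rightarrow> real \<Rightarrow> real" where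
  "ratio_rhs a b t u =
     (t * a / (t * a + b)) *
     (if t = 0 \<or> u = 0 then 1 else 1 - exp (- (a + b / t) / u))"

end

theory Submission
  imports Defs
begin

text \<open>Along the ray \<open>x = r y\<close> the joint distribution function is \<open>exp (- c\<^sub>r / y)\<close> with
  \<open>c\<^sub>r = \<integral> max (f/r) g\<close>. Enlarging \<open>y\<close> by a factor \<open>1 + \<delta>\<close> at fixed \<open>x\<close> raises the integrand
  \<open>max (f/x) (g/y)\<close> essentially only where \<open>f \<le> r g\<close>, so it changes the exponent by about
  \<open>\<delta> \<parallel>g\<parallel>\<^bsub>D\<^sub>r\<^esub> / y\<close>. On the grid \<open>y\<^sub>k = 1/(k h)\<close> the cell
  \<open>{X \<le> t Y, y\<^sub>k\<^sub>+\<^sub>1 < Y \<le> y\<^sub>k}\<close> therefore carries the fraction \<open>\<parallel>g\<parallel>\<^bsub>D\<^sub>t\<^esub> / c\<^sub>t\<close> of the increment of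
  \<open>exp (- c\<^sub>t / y)\<close>, and summing over the cells with \<open>Y > u\<close> gives
  \<open>\<parallel>g\<parallel>\<^bsub>D\<^sub>t\<^esub> / c\<^sub>t * (1 - exp (- c\<^sub>t / u))\<close> as \<open>h \<rightarrow> 0\<close>. Because of the kink of \<open>max\<close> on
  \<open>{f = t g}\<close> the cell estimates only hold with \<open>D\<^sub>t\<close> replaced by \<open>D\<^sub>s\<close>, \<open>s > t\<close>, on one side;
  the exact value follows by letting \<open>s \<down> t\<close>. Finally \<open>c\<^sub>t = \<parallel>g\<parallel>\<^bsub>D\<^sub>t\<^esub> + \<parallel>f\<parallel>\<^bsub>E\<^sub>t\<^esub> / t\<close>.\<close>

lemma max_divide_scale:
  fixes a b r p :: real
  assumes "r > 0" "p > 0"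
  shows "max (a / (r / p)) (b / (1 / p)) = p * max (a / r) b"
  using assms by (simp add: max_mult_distrib_left field_simps)

text \<open>Pointwise form of the cell estimates, on the grid \<open>y\<^sub>k = 1/(k h)\<close> and provided
  \<open>k (s - t) \<ge> t\<close>: stepping \<open>y\<close> from \<open>y\<^sub>k\<close> to \<open>y\<^sub>k\<^sub>+\<^sub>1\<close> at fixed \<open>x\<close> on a ray raises
  \<open>max (a/x) (b/y)\<close> by at most \<open>h b\<close>, and not at all unless \<open>a \<le> s b\<close>; it raises it by at
  least \<open>h b\<close> if \<open>a \<le> t b\<close>.\<close>

lemma max_grid_step_le:
  fixes a b t s h k :: real
  assumes "a \<ge> 0" "b \<ge> 0" "t > 0" "h > 0" "k \<ge> 1" "k * (s - t) \<ge> t"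
  shows "max (a / (t / (k * h))) (b / (1 / ((k + 1) * h)))
           \<le> (k * h) * max (a / t) b + h * (if a \<le> s * b then b else 0)"
proof -
  have a_scaled: "a / (t / (k * h)) = (k * h) * (a / t)" using assms by (simp add: field_simps)
  have b_scaled: "b / (1 / ((k + 1) * h)) = (k * h) * b + h * b" by (simp add: algebra_simps)
  have a_le: "(k * h) * (a / t) \<le> (k * h) * max (a / t) b" using assms by (intro mult_left_mono) auto
  have b_le: "(k * h) * b \<le> (k * h) * max (a / t) b" using assms by (intro mult_left_mono) auto
  show ?thesis
  proof (cases "a \<le> s * b")
    case True
    have "max (a / (t / (k * h))) (b / (1 / ((k + 1) * h))) = max ((k * h) * (a / t)) ((k * h) * b + h * b)"
      by (simp only: a_scaled b_scaled)
    also have "\<dots> \<le> (k * h) * max (a / t) b + h * b"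
      using a_le b_le assms by (intro max.boundedI) (auto intro: order_trans)
    finally show ?thesis using True by simp
  next
    case False
    have "k * a \<ge> k * (s * b)" using False assms by (intro mult_left_mono) auto
    moreover have "k * (s - t) * b \<ge> t * b" using assms by (intro mult_right_mono) auto
    ultimately have "k * a \<ge> (k + 1) * t * b" by (simp add: algebra_simps)
    then have "(k + 1) * b \<le> k * a / t" using assms by (simp add: field_simps)
    then have "(k + 1) * b * h \<le> k * a / t * h" using assms by (intro mult_right_mono) auto
    then have "b / (1 / ((k + 1) * h)) \<le> (k * h) * (a / t)" by (simp add: algebra_simps)
    then have b_bound: "b / (1 / ((k + 1) * h)) \<le> (k * h) * max (a / t) b" using a_le by linarith
    have "max (a / (t / (k * h))) (b / (1 / ((k + 1) * h))) \<le> (k * h) * max (a / t) b"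
      by (intro max.boundedI b_bound) (simp only: a_scaled a_le)
    then show ?thesis using False by simp
  qed
qed

lemma max_grid_step_ge:
  fixes a b t s h k :: real
  assumes "a \<ge> 0" "b \<ge> 0" "t > 0" "h > 0" "k \<ge> 1" "k * (s - t) \<ge> t"
  shows "max (a / (s / ((k + 1) * h))) (b / (1 / (k * h)))
           \<le> ((k + 1) * h) * max (a / s) b - h * (if a \<le> t * b then b else 0)"
proof -
  have "s - t > 0" using assms zero_less_mult_iff[of k "s - t"] by linarith
  then have s_pos: "s > 0" using assms by linarith
  have a_scaled: "a / (s / ((k + 1) * h)) = ((k + 1) * h) * (a / s)"
    using assms by (simp add: field_simps)
  have b_scaled: "b / (1 / (k * h)) = ((k + 1) * h) * b - h * b" by (simp add: algebra_simps)
  have a_le: "((k + 1) * h) * (a / s) \<le> ((k + 1) * h) * max (a / s) b"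
    using assms by (intro mult_left_mono) auto
  have b_le: "((k + 1) * h) * b \<le> ((k + 1) * h) * max (a / s) b"
    using assms by (intro mult_left_mono) auto
  show ?thesis
  proof (cases "a \<le> t * b")
    case True
    have "(k + 1) * a \<le> (k + 1) * (t * b)" using True assms by (intro mult_left_mono) auto
    moreover have "t * b \<le> k * (s - t) * b" using assms by (intro mult_right_mono) auto
    ultimately have "(k + 1) * a / s \<le> k * b" using s_pos by (simp add: field_simps)
    then have "(k + 1) * a / s * h \<le> k * b * h" using assms by (intro mult_right_mono) auto
    then have "a / (s / ((k + 1) * h)) \<le> b / (1 / (k * h))" by (simp add: a_scaled algebra_simps)
    moreover have "a / s \<le> b"
    proof -
      have "t * b \<le> s * b" using \<open>s - t > 0\<close> assms by (intro mult_right_mono) auto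
      then show ?thesis using True s_pos by (simp add: pos_divide_le_eq mult.commute)
    qed
    ultimately show ?thesis using True by (simp add: b_scaled max_def algebra_simps)
  next
    case False
    have "0 \<le> h * b" using assms by simp
    then have b_bound: "b / (1 / (k * h)) \<le> ((k + 1) * h) * max (a / s) b"
      using b_le b_scaled by linarith
    have "max (a / (s / ((k + 1) * h))) (b / (1 / (k * h))) \<le> ((k + 1) * h) * max (a / s) b"
      using a_le b_bound unfolding a_scaled by (rule max.boundedI)
    then show ?thesis using False by simp
  qed
qed

text \<open>Both exponential estimates are \<open>1 - exp (-x) \<le> x \<le> exp x - 1\<close>.\<close>

lemma exp_decrement_le:
  fixes z d e :: real
  assumes "d > 0" "e \<ge> 0"
  shows "exp (- z) - exp (- (z + e)) \<le> e / d * (exp (- (z - d)) - exp (- z))"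
proof -
  have "exp (- z) - exp (- (z + e)) = exp (- z) * (1 - exp (- e))"
    by (simp add: algebra_simps exp_add[symmetric])
  also have "\<dots> \<le> exp (- z) * e"
    using exp_ge_add_one_self[of "- e"] by (intro mult_left_mono) auto
  also have "\<dots> = e / d * (exp (- z) * d)" using assms by simp
  also have "\<dots> \<le> e / d * (exp (- z) * (exp d - 1))"
  proof -
    have "d \<le> exp d - 1" using exp_ge_add_one_self[of d] by linarith
    then show ?thesis using assms by (intro mult_left_mono) auto
  qed
  also have "exp (- z) * (exp d - 1) = exp (- (z - d)) - exp (- z)"
    by (simp add: algebra_simps exp_add[symmetric])
  finally show ?thesis .
qed

lemma exp_decrement_ge:
  fixes z d e :: real
  assumes "d > 0" "e \<ge> 0"
  shows "e / d * (exp (- z) - exp (- (z + d))) \<le> exp (- (z - e)) - exp (- z)"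
proof -
  have "e / d * (exp (- z) - exp (- (z + d))) = e / d * (exp (- z) * (1 - exp (- d)))"
    by (simp add: algebra_simps exp_add[symmetric])
  also have "\<dots> \<le> e / d * (exp (- z) * d)"
    using exp_ge_add_one_self[of "- d"] assms by (intro mult_left_mono) auto
  also have "\<dots> = exp (- z) * e" using assms by simp
  also have "\<dots> \<le> exp (- z) * (exp e - 1)"
  proof -
    have "e \<le> exp e - 1" using exp_ge_add_one_self[of e] by linarith
    then show ?thesis by (intro mult_left_mono) auto
  qed
  also have "\<dots> = exp (- (z - e)) - exp (- z)"
    by (simp add: algebra_simps exp_add[symmetric])
  finally show ?thesis .
qed

lemma sum_telescope_real:
  fixes \<phi> :: "real \<Rightarrow> real"
  assumes "K \<le> N"
  shows "(\<Sum>k\<in>{K..<N}. \<phi> (real k) - \<phi> (real k + 1)) = \<phi> (real K) - \<phi> (real N)"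
  using sum_Suc_diff'[OF assms, of "\<lambda>j. - \<phi> (real j)"] by (simp add: add.commute)

lemma ex_nat_mult_gap:
  fixes s t :: real
  assumes "s > t"
  obtains K :: nat where "K \<ge> 1" "real K * (s - t) \<ge> t"
proof
  show "real (nat \<lceil>t / (s - t)\<rceil> + 1) * (s - t) \<ge> t"
    using assms real_nat_ceiling_ge[of "t / (s - t)"] by (simp add: field_simps)
qed simp

subsection \<open>The distribution function along rays\<close>

locale frechet_spectral =
  fixes M :: "'s measure" and P :: "'w measure"
    and f g :: "'s \<Rightarrow> real" and X Y :: "'w \<Rightarrow> real"
  assumes f_measurable: "f \<in> borel_measurable M" and g_measurable: "g \<in> borel_measurable M"
    and f_nonneg: "\<And>s. s \<in> space M \<Longrightarrow> f s \<ge> 0" and g_nonneg: "\<And>s. s \<in> space M \<Longrightarrow> g s \<ge> 0"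
    and integrable_f: "integrable M f" and integrable_g: "integrable M g"
    and integral_f: "integral\<^sup>L M f = 1" and integral_g: "integral\<^sup>L M g = 1"
    and prob_space_P: "prob_space P"
    and X_measurable: "X \<in> borel_measurable P" and Y_measurable: "Y \<in> borel_measurable P"
    and joint_cdf: "\<And>x y. x > 0 \<Longrightarrow> y > 0 \<Longrightarrow>
           measure P {\<omega> \<in> space P. X \<omega> \<le> x \<and> Y \<omega> \<le> y}
             = exp (- (integral\<^sup>L M (\<lambda>s. max (f s / x) (g s / y))))"
begin

sublocale prob_space P by (rule prob_space_P)

lemmas [measurable] = f_measurable g_measurable X_measurable Y_measurable

text \<open>In the notation of the statement, \<open>ratio_set r\<close> is \<open>D\<^sub>r\<close>, \<open>ratio_mass r = \<parallel>g\<parallel>\<^bsub>D\<^sub>r\<^esub>\<close> and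
  \<open>excess_mass r = \<parallel>f\<parallel>\<^bsub>E\<^sub>r\<^esub>\<close>; \<open>ray_exponent r\<close> is the constant \<open>c\<^sub>r\<close> above, because
  \<open>exponent (r y) y = ray_exponent r / y\<close>.\<close>

definition exponent :: "real \<Rightarrow> real \<Rightarrow> real" where
  "exponent x y = (\<integral>s. max (f s / x) (g s / y) \<partial>M)"

definition ray_exponent :: "real \<Rightarrow> real" where
  "ray_exponent r = (\<integral>s. max (f s / r) (g s) \<partial>M)"

definition ratio_set :: "real \<Rightarrow> 's set" where
  "ratio_set r = {s \<in> space M. f s \<le> r * g s}"

definition ratio_mass :: "real \<Rightarrow> real" where
  "ratio_mass r = (\<integral>s. indicator (ratio_set r) s * g s \<partial>M)"

definition excess_mass :: "real \<Rightarrow> real" where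
  "excess_mass r = (LINT s:space M - ratio_set r|M. f s)"

lemma ratio_set_sets [measurable]: "ratio_set r \<in> sets M"
  unfolding ratio_set_def by measurable

lemma integrable_max_divide: "integrable M (\<lambda>s. max (f s / x) (g s / y))"
  by (intro integrable_max integrable_divide integrable_f integrable_g)

lemma integrable_ray: "integrable M (\<lambda>s. max (f s / r) (g s))"
  using integrable_max_divide[of r 1] by simp

lemma integrable_ratio_mass: "integrable M (\<lambda>s. indicator (ratio_set r) s * g s)"
  using integrable_real_mult_indicator[OF ratio_set_sets integrable_g] by (simp add: mult.commute)

lemma indicator_ratio_set_mult:
  "s \<in> space M \<Longrightarrow> indicator (ratio_set r) s * g s = (if f s \<le> r * g s then g s else 0)"
  by (auto simp: ratio_set_def indicator_def)

lemma joint_cdf_eq_exp: "x > 0 \<Longrightarrow> y > 0 \<Longrightarrow>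
    prob {\<omega> \<in> space P. X \<omega> \<le> x \<and> Y \<omega> \<le> y} = exp (- exponent x y)"
  using joint_cdf by (simp add: exponent_def)

lemma prob_cell:
  assumes "x > 0" "0 < y1" "y1 \<le> y2"
  shows "prob {\<omega> \<in> space P. X \<omega> \<le> x \<and> y1 < Y \<omega> \<and> Y \<omega> \<le> y2}
           = exp (- exponent x y2) - exp (- exponent x y1)"
proof -
  have "{\<omega> \<in> space P. X \<omega> \<le> x \<and> y1 < Y \<omega> \<and> Y \<omega> \<le> y2} =
     {\<omega> \<in> space P. X \<omega> \<le> x \<and> Y \<omega> \<le> y2} - {\<omega> \<in> space P. X \<omega> \<le> x \<and> Y \<omega> \<le> y1}"
    using assms by auto
  then show ?thesis
    using assms finite_measure_Diff[of "{\<omega> \<in> space P. X \<omega> \<le> x \<and> Y \<omega> \<le> y2}"]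
    by (simp add: joint_cdf_eq_exp subset_eq)
qed

lemma exponent_scale:
  assumes "r > 0" "p > 0"
  shows "exponent (r / p) (1 / p) = p * ray_exponent r"
proof -
  have "(\<lambda>s. max (f s / (r / p)) (g s / (1 / p))) = (\<lambda>s. p * max (f s / r) (g s))"
    by (rule ext, rule max_divide_scale[OF assms])
  then show ?thesis by (simp add: exponent_def ray_exponent_def)
qed

lemma prob_compl_ray_le:
  assumes "r > 0" "p > 0"
  shows "prob (space P - {\<omega> \<in> space P. X \<omega> \<le> r / p \<and> Y \<omega> \<le> 1 / p}) \<le> p * ray_exponent r"
proof -
  have "prob (space P - {\<omega> \<in> space P. X \<omega> \<le> r / p \<and> Y \<omega> \<le> 1 / p}) = 1 - exp (- (p * ray_exponent r))"
    using prob_compl[of "{\<omega> \<in> space P. X \<omega> \<le> r / p \<and> Y \<omega> \<le> 1 / p}"]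
      joint_cdf_eq_exp[of "r / p" "1 / p"] exponent_scale[OF assms] assms by simp
  then show ?thesis using exp_ge_add_one_self[of "- (p * ray_exponent r)"] by linarith
qed

lemma exponent_le_combination:
  assumes "\<And>s. s \<in> space M \<Longrightarrow>
             max (f s / x) (g s / y) \<le> p * max (f s / r) (g s) + q * (indicator (ratio_set \<sigma>) s * g s)"
  shows "exponent x y \<le> p * ray_exponent r + q * ratio_mass \<sigma>"
proof -
  have "exponent x y \<le> (\<integral>s. p * max (f s / r) (g s) + q * (indicator (ratio_set \<sigma>) s * g s) \<partial>M)"
    unfolding exponent_def using assms
    by (intro integral_mono integrable_max_divide Bochner_Integration.integrable_add
        Bochner_Integration.integrable_mult_right integrable_ray integrable_ratio_mass) auto
  also have "\<dots> = p * ray_exponent r + q * ratio_mass \<sigma>"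
    unfolding ray_exponent_def ratio_mass_def
    by (subst Bochner_Integration.integral_add)
      (auto intro!: integrable_ray integrable_ratio_mass Bochner_Integration.integrable_mult_right)
  finally show ?thesis .
qed

lemma ray_exponent_ge: "r > 0 \<Longrightarrow> 1 / r \<le> ray_exponent r"
  using integral_mono[OF integrable_divide[OF integrable_f] integrable_ray, of r r] integral_f
  by (simp add: ray_exponent_def)

lemma ray_exponent_pos: "r > 0 \<Longrightarrow> ray_exponent r > 0"
  using ray_exponent_ge[of r] by (smt (verit) divide_pos_pos)

lemma ratio_mass_nonneg: "ratio_mass r \<ge> 0"
  unfolding ratio_mass_def by (intro integral_nonneg_AE AE_I2) (simp add: g_nonneg)

lemma ratio_mass_le_1: "ratio_mass r \<le> 1"
  using integral_mono[OF integrable_ratio_mass integrable_g, of r] integral_g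
  by (simp add: ratio_mass_def indicator_def g_nonneg)

subsection \<open>Cell estimates on a grid\<close>

lemma prob_cell_upper:
  fixes h k s t :: real
  assumes "t > 0" "h > 0" "k \<ge> 1" "k * (s - t) \<ge> t"
  shows "prob {\<omega> \<in> space P. X \<omega> \<le> t / (k * h) \<and> 1 / ((k + 1) * h) < Y \<omega> \<and> Y \<omega> \<le> 1 / (k * h)}
           \<le> ratio_mass s / ray_exponent t
               * (exp (- ((k - 1) * h * ray_exponent t)) - exp (- (k * h * ray_exponent t)))"
proof -
  define c where "c = ray_exponent t"
  have c_pos: "c > 0" using ray_exponent_pos[OF \<open>t > 0\<close>] by (simp add: c_def)
  have grid: "t / (k * h) > 0" "0 < 1 / ((k + 1) * h)" "1 / ((k + 1) * h) \<le> 1 / (k * h)"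
    using assms by (auto intro!: divide_left_mono mult_right_mono)
  have upper_exponent: "exponent (t / (k * h)) (1 / ((k + 1) * h)) \<le> k * h * c + h * ratio_mass s"
    unfolding c_def
    by (rule exponent_le_combination)
      (use max_grid_step_le[OF f_nonneg g_nonneg assms] indicator_ratio_set_mult in simp)
  have "prob {\<omega> \<in> space P. X \<omega> \<le> t / (k * h) \<and> 1 / ((k + 1) * h) < Y \<omega> \<and> Y \<omega> \<le> 1 / (k * h)}
      = exp (- exponent (t / (k * h)) (1 / (k * h))) - exp (- exponent (t / (k * h)) (1 / ((k + 1) * h)))"
    by (rule prob_cell[OF grid])
  also have "exponent (t / (k * h)) (1 / (k * h)) = k * h * c"
    using exponent_scale[of t "k * h"] assms by (simp add: c_def)
  also have "exp (- (k * h * c)) - exp (- exponent (t / (k * h)) (1 / ((k + 1) * h)))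
      \<le> exp (- (k * h * c)) - exp (- (k * h * c + h * ratio_mass s))"
    using upper_exponent by simp
  also have "\<dots> \<le> (h * ratio_mass s) / (h * c) * (exp (- (k * h * c - h * c)) - exp (- (k * h * c)))"
    by (rule exp_decrement_le) (use ratio_mass_nonneg c_pos assms in auto)
  also have "\<dots> = ratio_mass s / c * (exp (- ((k - 1) * h * c)) - exp (- (k * h * c)))"
    using assms by (simp add: algebra_simps)
  finally show ?thesis by (simp add: c_def)
qed

lemma prob_cell_lower:
  fixes h k s t :: real
  assumes "t > 0" "h > 0" "k \<ge> 1" "k * (s - t) \<ge> t"
  shows "ratio_mass t / ray_exponent s
           * (exp (- ((k + 1) * h * ray_exponent s)) - exp (- ((k + 2) * h * ray_exponent s)))
         \<le> prob {\<omega> \<in> space P. X \<omega> \<le> s / ((k + 1) * h) \<and> 1 / ((k + 1) * h) < Y \<omega> \<and> Y \<omega> \<le> 1 / (k * h)}"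
proof -
  have s_pos: "s > 0" using assms zero_less_mult_iff[of k "s - t"] by linarith
  define c where "c = ray_exponent s"
  have c_pos: "c > 0" using ray_exponent_pos[OF s_pos] by (simp add: c_def)
  have grid: "s / ((k + 1) * h) > 0" "0 < 1 / ((k + 1) * h)" "1 / ((k + 1) * h) \<le> 1 / (k * h)"
    using assms s_pos by (auto intro!: divide_left_mono mult_right_mono)
  have lower_exponent: "exponent (s / ((k + 1) * h)) (1 / (k * h)) \<le> (k + 1) * h * c + (- h) * ratio_mass t"
    unfolding c_def
    by (rule exponent_le_combination)
      (use max_grid_step_ge[OF f_nonneg g_nonneg assms] indicator_ratio_set_mult in simp)
  have "ratio_mass t / c * (exp (- ((k + 1) * h * c)) - exp (- ((k + 2) * h * c)))
      = (h * ratio_mass t) / (h * c) * (exp (- ((k + 1) * h * c)) - exp (- ((k + 1) * h * c + h * c)))"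
    using assms by (simp add: algebra_simps)
  also have "\<dots> \<le> exp (- ((k + 1) * h * c - h * ratio_mass t)) - exp (- ((k + 1) * h * c))"
    by (rule exp_decrement_ge) (use ratio_mass_nonneg c_pos assms in auto)
  also have "\<dots> \<le> exp (- exponent (s / ((k + 1) * h)) (1 / (k * h))) - exp (- ((k + 1) * h * c))"
    using lower_exponent by simp
  also have "\<dots> = prob {\<omega> \<in> space P. X \<omega> \<le> s / ((k + 1) * h) \<and> 1 / ((k + 1) * h) < Y \<omega> \<and> Y \<omega> \<le> 1 / (k * h)}"
    using prob_cell[OF grid] exponent_scale[of s "(k + 1) * h"] assms s_pos by (simp add: c_def)
  finally show ?thesis unfolding c_def .
qed

lemma ratio_event_subset_cells:
  fixes h t u :: real and K N :: nat
  assumes "t \<ge> 0" "u > 0" "h > 0" "K \<ge> 1" "real N * h = 1 / u"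
  shows "{\<omega> \<in> space P. X \<omega> \<le> t * Y \<omega> \<and> Y \<omega> > u}
    \<subseteq> (space P - {\<omega> \<in> space P. X \<omega> \<le> t / (real K * h) \<and> Y \<omega> \<le> 1 / (real K * h)})
       \<union> (\<Union>k\<in>{K..<N}.
            {\<omega> \<in> space P. X \<omega> \<le> t / (real k * h) \<and> 1 / ((real k + 1) * h) < Y \<omega> \<and> Y \<omega> \<le> 1 / (real k * h)})"
    (is "_ \<subseteq> (space P - ?G) \<union> (\<Union>k\<in>{K..<N}. ?C k)")
proof
  fix \<omega> assume \<omega>: "\<omega> \<in> {\<omega> \<in> space P. X \<omega> \<le> t * Y \<omega> \<and> Y \<omega> > u}"
  show "\<omega> \<in> (space P - ?G) \<union> (\<Union>k\<in>{K..<N}. ?C k)"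
  proof (cases "\<omega> \<in> ?G")
    case False
    then show ?thesis using \<omega> by (intro UnI1 DiffI) auto
  next
    case True
    have Y_pos: "Y \<omega> > 0" using \<omega> \<open>u > 0\<close> by auto
    define z where "z = 1 / (h * Y \<omega>)"
    have "real K * h * Y \<omega> \<le> 1" using True \<open>h > 0\<close> \<open>K \<ge> 1\<close> by (simp add: field_simps)
    then have "real K \<le> z" using \<open>h > 0\<close> Y_pos by (simp add: z_def field_simps)
    moreover have "1 < real N * h * Y \<omega>"
      using mult_strict_left_mono[of u "Y \<omega>" "real N * h"] \<omega> assms by simp
    then have "z < real N" using \<open>h > 0\<close> Y_pos by (simp add: z_def field_simps)
    ultimately have z_bounds: "real K \<le> z" "z < real N" by simp_all
    define k where "k = nat \<lfloor>z\<rfloor>"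
    have "real k = of_int \<lfloor>z\<rfloor>" using z_bounds \<open>K \<ge> 1\<close> by (simp add: k_def)
    then have k_floor: "real k \<le> z" "z < real k + 1" by linarith+
    have k_range: "K \<le> k" "k < N" using z_bounds k_floor by linarith+
    have k_pos: "real k * h > 0" using k_range \<open>K \<ge> 1\<close> \<open>h > 0\<close> by simp
    have "real k * h * Y \<omega> \<le> 1" using k_floor(1) \<open>h > 0\<close> Y_pos by (simp add: z_def field_simps)
    then have Y_upper: "Y \<omega> \<le> 1 / (real k * h)" using k_pos by (simp add: field_simps)
    have "1 < (real k + 1) * h * Y \<omega>" using k_floor(2) \<open>h > 0\<close> Y_pos by (simp add: z_def field_simps)
    moreover have "(real k + 1) * h > 0" using \<open>h > 0\<close> by simp
    ultimately have Y_lower: "1 / ((real k + 1) * h) < Y \<omega>" by (simp add: divide_less_eq algebra_simps)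
    have "X \<omega> \<le> t / (real k * h)"
      using \<omega> mult_left_mono[OF Y_upper \<open>t \<ge> 0\<close>] by simp
    then have "\<omega> \<in> ?C k" using \<omega> Y_upper Y_lower by simp
    then show ?thesis using k_range by (intro UnI2 UN_I[of k]) auto
  qed
qed

lemma sum_prob_cells_le:
  fixes h s u :: real and K N :: nat
  assumes "s \<ge> 0" "h > 0" "real N * h = 1 / u"
  shows "(\<Sum>k\<in>{K..<N}.
            prob {\<omega> \<in> space P. X \<omega> \<le> s / ((real k + 1) * h) \<and> 1 / ((real k + 1) * h) < Y \<omega> \<and> Y \<omega> \<le> 1 / (real k * h)})
         \<le> prob {\<omega> \<in> space P. X \<omega> \<le> s * Y \<omega> \<and> Y \<omega> > u}"
proof -
  define L where "L k = {\<omega> \<in> space P. X \<omega> \<le> s / ((real k + 1) * h)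
                           \<and> 1 / ((real k + 1) * h) < Y \<omega> \<and> Y \<omega> \<le> 1 / (real k * h)}" for k :: nat
  have "L m \<inter> L n = {}" if "m < n" for m n
  proof -
    have "1 / (real n * h) \<le> 1 / ((real m + 1) * h)"
      using that \<open>h > 0\<close> by (intro divide_left_mono mult_right_mono) auto
    then show ?thesis unfolding L_def by auto
  qed
  then have disjoint: "disjoint_family_on L {K..<N}"
    unfolding disjoint_family_on_def by (metis inf_commute linorder_neqE_nat)
  have "(\<Sum>k\<in>{K..<N}. prob (L k)) = prob (\<Union>k\<in>{K..<N}. L k)"
    by (intro finite_measure_finite_Union[symmetric] disjoint) (auto simp: L_def)
  also have "\<dots> \<le> prob {\<omega> \<in> space P. X \<omega> \<le> s * Y \<omega> \<and> Y \<omega> > u}"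
  proof (intro finite_measure_mono subsetI)
    fix \<omega> assume "\<omega> \<in> (\<Union>k\<in>{K..<N}. L k)"
    then obtain k where k: "k < N" and \<omega>: "\<omega> \<in> L k" by auto
    then have Y_low: "1 / ((real k + 1) * h) < Y \<omega>" by (simp add: L_def)
    have "s / ((real k + 1) * h) \<le> s * Y \<omega>"
      using mult_left_mono[OF less_imp_le[OF Y_low] \<open>s \<ge> 0\<close>] by simp
    moreover have "u = 1 / (real N * h)" using assms k by (simp add: divide_eq_eq)
    then have "u \<le> 1 / ((real k + 1) * h)"
      using k \<open>h > 0\<close> by (auto intro!: divide_left_mono mult_right_mono)
    ultimately show "\<omega> \<in> {\<omega> \<in> space P. X \<omega> \<le> s * Y \<omega> \<and> Y \<omega> > u}"
      using \<omega> Y_low by (auto simp: L_def)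
  qed simp
  finally show ?thesis by (simp add: L_def)
qed

lemma prob_ratio_le_grid:
  fixes K N :: nat
  assumes "t > 0" "u > 0" "K \<ge> 1" "real K * (s - t) \<ge> t" "N \<ge> K"
  shows "prob {\<omega> \<in> space P. X \<omega> \<le> t * Y \<omega> \<and> Y \<omega> > u}
           \<le> ratio_mass s / ray_exponent t * (1 - exp (- ray_exponent t / u))
              + real K * ray_exponent t / u / real N"
proof -
  define h where "h = 1 / (u * N)"
  define c where "c = ray_exponent t"
  define G where "G = {\<omega> \<in> space P. X \<omega> \<le> t / (real K * h) \<and> Y \<omega> \<le> 1 / (real K * h)}"
  define C where "C k = {\<omega> \<in> space P. X \<omega> \<le> t / (real k * h) \<and> 1 / ((real k + 1) * h) < Y \<omega> \<and> Y \<omega> \<le> 1 / (real k * h)}"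
    for k :: nat
  have N_pos: "N > 0" using assms by linarith
  have h_pos: "h > 0" and Nh: "real N * h = 1 / u" using N_pos \<open>u > 0\<close> by (simp_all add: h_def)
  have c_pos: "c > 0" using ray_exponent_pos[OF \<open>t > 0\<close>] by (simp add: c_def)
  have "prob {\<omega> \<in> space P. X \<omega> \<le> t * Y \<omega> \<and> Y \<omega> > u} \<le> prob ((space P - G) \<union> (\<Union>k\<in>{K..<N}. C k))"
    using ratio_event_subset_cells[OF less_imp_le[OF \<open>t > 0\<close>] \<open>u > 0\<close> h_pos \<open>K \<ge> 1\<close> Nh]
    by (intro finite_measure_mono) (auto simp: G_def C_def)
  also have "\<dots> \<le> prob (space P - G) + (\<Sum>k\<in>{K..<N}. prob (C k))"
    by (intro order_trans[OF measure_Un_le] add_left_mono measure_UNION_le) (auto simp: G_def C_def)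
  also have "prob (space P - G) \<le> real K * h * c"
    using prob_compl_ray_le[of t "real K * h"] \<open>t > 0\<close> h_pos \<open>K \<ge> 1\<close> by (simp add: G_def c_def)
  also have "(\<Sum>k\<in>{K..<N}. prob (C k))
      \<le> (\<Sum>k\<in>{K..<N}. ratio_mass s / c * (exp (- ((real k - 1) * h * c)) - exp (- (real k * h * c))))"
  proof (intro sum_mono)
    fix k assume "k \<in> {K..<N}"
    then have "real K * (s - t) \<le> real k * (s - t)" "real k \<ge> 1"
      using assms zero_less_mult_iff[of "real K" "s - t"] by (auto intro!: mult_right_mono)
    then show "prob (C k) \<le> ratio_mass s / c * (exp (- ((real k - 1) * h * c)) - exp (- (real k * h * c)))"
      unfolding C_def c_def using prob_cell_upper[OF \<open>t > 0\<close> h_pos] assms by force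
  qed
  also have "\<dots> = ratio_mass s / c * (exp (- ((real K - 1) * h * c)) - exp (- ((real N - 1) * h * c)))"
    unfolding sum_distrib_left[symmetric]
    using sum_telescope_real[OF \<open>N \<ge> K\<close>, of "\<lambda>x. exp (- ((x - 1) * h * c))"] by simp
  also have "\<dots> \<le> ratio_mass s / c * (1 - exp (- c / u))"
  proof (intro mult_left_mono)
    have "- c / u \<le> - ((real N - 1) * h * c)" using Nh c_pos h_pos by (simp add: field_simps)
    then have "exp (- c / u) \<le> exp (- ((real N - 1) * h * c))" by simp
    moreover have "exp (- ((real K - 1) * h * c)) \<le> 1" using \<open>K \<ge> 1\<close> h_pos c_pos by simp
    ultimately show "exp (- ((real K - 1) * h * c)) - exp (- ((real N - 1) * h * c)) \<le> 1 - exp (- c / u)"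
      by linarith
  qed (use ratio_mass_nonneg c_pos in simp)
  finally show ?thesis using N_pos by (simp add: h_def c_def field_simps)
qed

lemma prob_ratio_ge_grid:
  fixes K N :: nat
  assumes "t > 0" "u > 0" "K \<ge> 1" "real K * (s - t) \<ge> t" "N \<ge> K"
  shows "ratio_mass t / ray_exponent s * (1 - exp (- ray_exponent s / u))
           - ratio_mass t * (real K + 1) / u / real N
         \<le> prob {\<omega> \<in> space P. X \<omega> \<le> s * Y \<omega> \<and> Y \<omega> > u}"
proof -
  define h where "h = 1 / (u * N)"
  define c where "c = ray_exponent s"
  define a where "a = ratio_mass t"
  have N_pos: "N > 0" using assms by linarith
  have h_pos: "h > 0" and Nh: "real N * h = 1 / u" using N_pos \<open>u > 0\<close> by (simp_all add: h_def)
  have s_pos: "s > 0" using assms zero_less_mult_iff[of "real K" "s - t"] by linarith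
  have c_pos: "c > 0" using ray_exponent_pos[OF s_pos] by (simp add: c_def)
  have a_nonneg: "a \<ge> 0" using ratio_mass_nonneg by (simp add: a_def)
  have "a / c * (1 - exp (- c / u)) - a * (real K + 1) * h = a / c * (1 - (real K + 1) * h * c - exp (- c / u))"
    using c_pos by (simp add: field_simps)
  also have "\<dots> \<le> a / c * (exp (- ((real K + 1) * h * c)) - exp (- ((real N + 1) * h * c)))"
  proof (intro mult_left_mono)
    have "- ((real N + 1) * h * c) \<le> - c / u" using Nh c_pos h_pos by (simp add: field_simps)
    then have "exp (- ((real N + 1) * h * c)) \<le> exp (- c / u)" by simp
    then show "1 - (real K + 1) * h * c - exp (- c / u) \<le> exp (- ((real K + 1) * h * c)) - exp (- ((real N + 1) * h * c))"
      using exp_ge_add_one_self[of "- ((real K + 1) * h * c)"] by linarith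
  qed (use a_nonneg c_pos in simp)
  also have "\<dots> = (\<Sum>k\<in>{K..<N}. a / c * (exp (- ((real k + 1) * h * c)) - exp (- ((real k + 2) * h * c))))"
    unfolding sum_distrib_left[symmetric]
    using sum_telescope_real[OF \<open>N \<ge> K\<close>, of "\<lambda>x. exp (- ((x + 1) * h * c))"]
    by (simp add: add.assoc)
  also have "\<dots> \<le> (\<Sum>k\<in>{K..<N}. prob {\<omega> \<in> space P. X \<omega> \<le> s / ((real k + 1) * h)
                                     \<and> 1 / ((real k + 1) * h) < Y \<omega> \<and> Y \<omega> \<le> 1 / (real k * h)})"
  proof (intro sum_mono)
    fix k assume "k \<in> {K..<N}"
    then have "real K * (s - t) \<le> real k * (s - t)" "real k \<ge> 1"
      using assms zero_less_mult_iff[of "real K" "s - t"] by (auto intro!: mult_right_mono)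
    then show "a / c * (exp (- ((real k + 1) * h * c)) - exp (- ((real k + 2) * h * c)))
        \<le> prob {\<omega> \<in> space P. X \<omega> \<le> s / ((real k + 1) * h) \<and> 1 / ((real k + 1) * h) < Y \<omega> \<and> Y \<omega> \<le> 1 / (real k * h)}"
      unfolding a_def c_def using prob_cell_lower[OF \<open>t > 0\<close> h_pos] assms by force
  qed
  also have "\<dots> \<le> prob {\<omega> \<in> space P. X \<omega> \<le> s * Y \<omega> \<and> Y \<omega> > u}"
    using sum_prob_cells_le[OF less_imp_le[OF s_pos] h_pos Nh] by simp
  finally show ?thesis using N_pos by (simp add: a_def c_def h_def)
qed

subsection \<open>Passage to the limit\<close>

lemma prob_ratio_le:
  assumes "t > 0" "s > t" "u > 0"
  shows "prob {\<omega> \<in> space P. X \<omega> \<le> t * Y \<omega> \<and> Y \<omega> > u}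
           \<le> ratio_mass s / ray_exponent t * (1 - exp (- ray_exponent t / u))"
proof -
  obtain K :: nat where K: "K \<ge> 1" "real K * (s - t) \<ge> t"
    using ex_nat_mult_gap[OF \<open>s > t\<close>] by blast
  have "(\<lambda>N. ratio_mass s / ray_exponent t * (1 - exp (- ray_exponent t / u))
             + real K * ray_exponent t / u / real N)
        \<longlonglongrightarrow> ratio_mass s / ray_exponent t * (1 - exp (- ray_exponent t / u))"
    using tendsto_add[OF tendsto_const lim_const_over_n[of "real K * ray_exponent t / u"]] by simp
  then show ?thesis
    by (rule LIMSEQ_le_const) (use prob_ratio_le_grid[OF \<open>t > 0\<close> \<open>u > 0\<close> K] in blast)
qed

lemma prob_ratio_ge:
  assumes "t > 0" "s > t" "u > 0"
  shows "ratio_mass t / ray_exponent s * (1 - exp (- ray_exponent s / u))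
           \<le> prob {\<omega> \<in> space P. X \<omega> \<le> s * Y \<omega> \<and> Y \<omega> > u}"
proof -
  obtain K :: nat where K: "K \<ge> 1" "real K * (s - t) \<ge> t"
    using ex_nat_mult_gap[OF \<open>s > t\<close>] by blast
  have "(\<lambda>N. ratio_mass t / ray_exponent s * (1 - exp (- ray_exponent s / u))
             - ratio_mass t * (real K + 1) / u / real N)
        \<longlonglongrightarrow> ratio_mass t / ray_exponent s * (1 - exp (- ray_exponent s / u))"
    using tendsto_diff[OF tendsto_const lim_const_over_n[of "ratio_mass t * (real K + 1) / u"]] by simp
  then show ?thesis
    by (rule LIMSEQ_le_const2) (use prob_ratio_ge_grid[OF \<open>t > 0\<close> \<open>u > 0\<close> K] in blast)
qed

lemma ratio_mass_tendsto:
  assumes "\<And>n. r n \<ge> t" "r \<longlonglongrightarrow> t"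
  shows "(\<lambda>n. ratio_mass (r n)) \<longlonglongrightarrow> ratio_mass t"
  unfolding ratio_mass_def
proof (rule integral_dominated_convergence[where w = g])
  show "(\<lambda>s. indicator (ratio_set t) s * g s) \<in> borel_measurable M"
    "\<And>n. (\<lambda>s. indicator (ratio_set (r n)) s * g s) \<in> borel_measurable M"
    using integrable_ratio_mass by (blast intro: borel_measurable_integrable)+
  show "AE s in M. norm (indicator (ratio_set (r n)) s * g s) \<le> g s" for n
    by (intro AE_I2) (auto simp: g_nonneg indicator_def)
  show "AE s in M. (\<lambda>n. indicator (ratio_set (r n)) s * g s) \<longlonglongrightarrow> indicator (ratio_set t) s * g s"
  proof (intro AE_I2 tendsto_eventually)
    fix s assume s: "s \<in> space M"
    consider "g s = 0" | "f s \<le> t * g s" | "g s \<noteq> 0" "\<not> f s \<le> t * g s" by blast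
    then show "\<forall>\<^sub>F n in sequentially. indicator (ratio_set (r n)) s * g s = indicator (ratio_set t) s * g s"
    proof cases
      case 1
      then show ?thesis by simp
    next
      case 2
      have "f s \<le> r n * g s" for n
        using 2 mult_right_mono[OF assms(1) g_nonneg[OF s], of n] by linarith
      then show ?thesis using 2 s by (simp add: ratio_set_def)
    next
      case 3
      have lim: "(\<lambda>n. r n * g s) \<longlonglongrightarrow> t * g s" by (intro tendsto_intros assms(2))
      have "\<forall>\<^sub>F n in sequentially. r n * g s < f s"
        using order_tendstoD(2)[OF lim] 3 by (simp add: not_le)
      then show ?thesis by eventually_elim (use 3 in \<open>auto simp: ratio_set_def\<close>)
    qed
  qed
qed (rule integrable_g)

lemma ray_exponent_tendsto:
  assumes "t > 0" "\<And>n. r n \<ge> t" "r \<longlonglongrightarrow> t"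
  shows "(\<lambda>n. ray_exponent (r n)) \<longlonglongrightarrow> ray_exponent t"
  unfolding ray_exponent_def
proof (rule integral_dominated_convergence[where w = "\<lambda>s. f s / t + g s"])
  show "(\<lambda>s. max (f s / t) (g s)) \<in> borel_measurable M"
    "\<And>n. (\<lambda>s. max (f s / r n) (g s)) \<in> borel_measurable M"
    using integrable_ray by (blast intro: borel_measurable_integrable)+
  show "integrable M (\<lambda>s. f s / t + g s)"
    by (intro Bochner_Integration.integrable_add integrable_divide integrable_f integrable_g)
  show "AE s in M. norm (max (f s / r n) (g s)) \<le> f s / t + g s" for n
  proof (intro AE_I2)
    fix s assume s: "s \<in> space M"
    have "f s / r n \<le> f s / t"
      using f_nonneg[OF s] assms(1,2) by (intro divide_left_mono mult_pos_pos) (auto intro: less_le_trans)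
    moreover have "0 \<le> f s / r n" using f_nonneg[OF s] assms(1) assms(2)[of n] by simp
    ultimately show "norm (max (f s / r n) (g s)) \<le> f s / t + g s" using g_nonneg[OF s] by auto
  qed
  show "AE s in M. (\<lambda>n. max (f s / r n) (g s)) \<longlonglongrightarrow> max (f s / t) (g s)"
    using assms by (intro AE_I2 tendsto_intros) auto
qed

lemma prob_ratio_tendsto:
  assumes "decseq r" "r \<longlonglongrightarrow> t" "u \<ge> 0"
  shows "(\<lambda>n. prob {\<omega> \<in> space P. X \<omega> \<le> r n * Y \<omega> \<and> Y \<omega> > u})
           \<longlonglongrightarrow> prob {\<omega> \<in> space P. X \<omega> \<le> t * Y \<omega> \<and> Y \<omega> > u}"
proof -
  define B where "B n = {\<omega> \<in> space P. X \<omega> \<le> r n * Y \<omega> \<and> Y \<omega> > u}" for n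
  have "range B \<subseteq> events" by (auto simp: B_def)
  moreover have "decseq B"
    unfolding decseq_def
  proof (intro allI impI subsetI)
    fix m n \<omega> assume "m \<le> n" "\<omega> \<in> B n"
    moreover from this have "r n * Y \<omega> \<le> r m * Y \<omega>"
      using assms(1,3) by (intro mult_right_mono) (auto simp: decseq_def B_def)
    ultimately show "\<omega> \<in> B m" by (auto simp: B_def)
  qed
  ultimately have "(\<lambda>n. prob (B n)) \<longlonglongrightarrow> prob (\<Inter> (range B))"
    by (rule finite_Lim_measure_decseq)
  moreover have "\<Inter> (range B) = {\<omega> \<in> space P. X \<omega> \<le> t * Y \<omega> \<and> Y \<omega> > u}"
  proof (intro equalityI subsetI)
    fix \<omega> assume "\<omega> \<in> \<Inter> (range B)"
    then have \<omega>: "\<omega> \<in> space P" "Y \<omega> > u" "\<And>n. X \<omega> \<le> r n * Y \<omega>" by (auto simp: B_def)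
    have "(\<lambda>n. r n * Y \<omega>) \<longlonglongrightarrow> t * Y \<omega>" by (intro tendsto_intros assms(2))
    then have "X \<omega> \<le> t * Y \<omega>" using \<omega>(3) by (intro LIMSEQ_le_const) auto
    then show "\<omega> \<in> {\<omega> \<in> space P. X \<omega> \<le> t * Y \<omega> \<and> Y \<omega> > u}" using \<omega> by auto
  next
    fix \<omega> assume \<omega>: "\<omega> \<in> {\<omega> \<in> space P. X \<omega> \<le> t * Y \<omega> \<and> Y \<omega> > u}"
    have "t * Y \<omega> \<le> r n * Y \<omega>" for n
      using decseq_ge[OF assms(1,2)] \<omega> assms(3) by (intro mult_right_mono) auto
    then have "X \<omega> \<le> r n * Y \<omega>" for n using \<omega> order_trans by blast
    then show "\<omega> \<in> \<Inter> (range B)" using \<omega> by (simp add: B_def)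
  qed
  ultimately show ?thesis by (simp add: B_def)
qed

lemma prob_ratio_eq:
  assumes "t > 0" "u > 0"
  shows "prob {\<omega> \<in> space P. X \<omega> \<le> t * Y \<omega> \<and> Y \<omega> > u}
           = ratio_mass t / ray_exponent t * (1 - exp (- ray_exponent t / u))"
proof -
  define r where "r n = t + inverse (real (Suc n))" for n
  have r_gt: "r n > t" for n by (simp add: r_def)
  have r_lim: "r \<longlonglongrightarrow> t"
    unfolding r_def using tendsto_add[OF tendsto_const LIMSEQ_inverse_real_of_nat, of t] by simp
  have r_dec: "decseq r" unfolding r_def by (intro decseq_SucI) (simp add: field_simps)
  have c_nonzero: "ray_exponent t \<noteq> 0" using ray_exponent_pos[OF \<open>t > 0\<close>] by simp
  show ?thesis
  proof (rule antisym)
    have "(\<lambda>n. ratio_mass (r n) / ray_exponent t * (1 - exp (- ray_exponent t / u)))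
        \<longlonglongrightarrow> ratio_mass t / ray_exponent t * (1 - exp (- ray_exponent t / u))"
      using c_nonzero r_gt r_lim by (intro tendsto_intros ratio_mass_tendsto) (auto intro: less_imp_le)
    then show "prob {\<omega> \<in> space P. X \<omega> \<le> t * Y \<omega> \<and> Y \<omega> > u}
        \<le> ratio_mass t / ray_exponent t * (1 - exp (- ray_exponent t / u))"
      by (rule LIMSEQ_le_const) (use prob_ratio_le[OF \<open>t > 0\<close> r_gt \<open>u > 0\<close>] in blast)
  next
    have "(\<lambda>n. ratio_mass t / ray_exponent (r n) * (1 - exp (- ray_exponent (r n) / u)))
        \<longlonglongrightarrow> ratio_mass t / ray_exponent t * (1 - exp (- ray_exponent t / u))"
      using c_nonzero \<open>u > 0\<close> r_gt r_lim \<open>t > 0\<close>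
      by (intro tendsto_intros ray_exponent_tendsto) (auto intro: less_imp_le)
    moreover have "(\<lambda>n. prob {\<omega> \<in> space P. X \<omega> \<le> r n * Y \<omega> \<and> Y \<omega> > u})
        \<longlonglongrightarrow> prob {\<omega> \<in> space P. X \<omega> \<le> t * Y \<omega> \<and> Y \<omega> > u}"
      using prob_ratio_tendsto[OF r_dec r_lim] \<open>u > 0\<close> by simp
    ultimately show "ratio_mass t / ray_exponent t * (1 - exp (- ray_exponent t / u))
        \<le> prob {\<omega> \<in> space P. X \<omega> \<le> t * Y \<omega> \<and> Y \<omega> > u}"
      by (rule LIMSEQ_le) (use prob_ratio_ge[OF \<open>t > 0\<close> r_gt \<open>u > 0\<close>] in blast)
  qed
qed

lemma prob_ratio_tendsto_0:
  "(\<lambda>n. prob {\<omega> \<in> space P. X \<omega> \<le> t * Y \<omega> \<and> Y \<omega> > inverse (real (Suc n))})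
     \<longlonglongrightarrow> prob {\<omega> \<in> space P. X \<omega> \<le> t * Y \<omega> \<and> Y \<omega> > 0}"
proof -
  define B where "B n = {\<omega> \<in> space P. X \<omega> \<le> t * Y \<omega> \<and> Y \<omega> > inverse (real (Suc n))}" for n
  have "range B \<subseteq> events" by (auto simp: B_def)
  moreover have "incseq B"
  proof (intro incseq_SucI subsetI)
    fix n \<omega> assume \<omega>: "\<omega> \<in> B n"
    have "inverse (real (Suc (Suc n))) \<le> inverse (real (Suc n))"
      by (rule le_imp_inverse_le) auto
    also have "\<dots> < Y \<omega>" using \<omega> by (simp add: B_def)
    finally show "\<omega> \<in> B (Suc n)" using \<omega> by (simp add: B_def)
  qed
  ultimately have "(\<lambda>n. prob (B n)) \<longlonglongrightarrow> prob (\<Union> (range B))"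
    by (rule finite_Lim_measure_incseq)
  moreover have "\<Union> (range B) = {\<omega> \<in> space P. X \<omega> \<le> t * Y \<omega> \<and> Y \<omega> > 0}"
  proof (intro equalityI subsetI)
    fix \<omega> assume "\<omega> \<in> \<Union> (range B)"
    then obtain n where \<omega>: "\<omega> \<in> B n" by auto
    have "0 < inverse (real (Suc n))" by simp
    also have "\<dots> < Y \<omega>" using \<omega> by (simp add: B_def)
    finally show "\<omega> \<in> {\<omega> \<in> space P. X \<omega> \<le> t * Y \<omega> \<and> Y \<omega> > 0}"
      using \<omega> by (simp add: B_def)
  next
    fix \<omega> assume \<omega>: "\<omega> \<in> {\<omega> \<in> space P. X \<omega> \<le> t * Y \<omega> \<and> Y \<omega> > 0}"
    then obtain n where "inverse (real (Suc n)) < Y \<omega>" using reals_Archimedean by auto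
    then show "\<omega> \<in> \<Union> (range B)" using \<omega> by (auto simp: B_def)
  qed
  ultimately show ?thesis by (simp add: B_def)
qed

lemma prob_ratio_eq_0:
  assumes "t > 0"
  shows "prob {\<omega> \<in> space P. X \<omega> \<le> t * Y \<omega> \<and> Y \<omega> > 0} = ratio_mass t / ray_exponent t"
proof -
  define c where "c = ray_exponent t"
  have "exp (- c / inverse (real (Suc n))) = exp (- c) ^ Suc n" for n
    using exp_of_nat_mult[of "Suc n" "- c"] by (simp add: divide_inverse mult.commute)
  moreover have "(\<lambda>n. exp (- c) ^ Suc n) \<longlonglongrightarrow> 0"
    using LIMSEQ_power_zero[of "exp (- c)"] ray_exponent_pos[OF assms] by (simp add: LIMSEQ_Suc c_def)
  ultimately have "(\<lambda>n. ratio_mass t / c * (1 - exp (- c / inverse (real (Suc n)))))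
      \<longlonglongrightarrow> ratio_mass t / c * (1 - 0)"
    by (intro tendsto_intros) simp
  then have "(\<lambda>n. prob {\<omega> \<in> space P. X \<omega> \<le> t * Y \<omega> \<and> Y \<omega> > inverse (real (Suc n))})
      \<longlonglongrightarrow> ratio_mass t / c"
    using prob_ratio_eq[OF assms] by (simp add: c_def)
  then show ?thesis using LIMSEQ_unique[OF prob_ratio_tendsto_0] by (simp add: c_def)
qed

lemma prob_quotient_nonpos:
  assumes "u \<ge> 0"
  shows "prob {\<omega> \<in> space P. X \<omega> / Y \<omega> \<le> 0 \<and> Y \<omega> > u} = 0"
proof -
  have "prob {\<omega> \<in> space P. X \<omega> / Y \<omega> \<le> 0 \<and> Y \<omega> > u} \<le> 0"
  proof (rule field_le_epsilon)
    fix e :: real assume "e > 0"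
    have "{\<omega> \<in> space P. X \<omega> / Y \<omega> \<le> 0 \<and> Y \<omega> > u} \<subseteq> {\<omega> \<in> space P. X \<omega> \<le> e * Y \<omega> \<and> Y \<omega> > 0}"
    proof (intro subsetI)
      fix \<omega> assume \<omega>: "\<omega> \<in> {\<omega> \<in> space P. X \<omega> / Y \<omega> \<le> 0 \<and> Y \<omega> > u}"
      then have "Y \<omega> > 0" using assms by auto
      moreover from this \<omega> have "X \<omega> \<le> 0" by (simp add: divide_le_0_iff)
      moreover from calculation have "0 < e * Y \<omega>" using \<open>e > 0\<close> by simp
      ultimately show "\<omega> \<in> {\<omega> \<in> space P. X \<omega> \<le> e * Y \<omega> \<and> Y \<omega> > 0}" using \<omega> by simp
    qed
    then have "prob {\<omega> \<in> space P. X \<omega> / Y \<omega> \<le> 0 \<and> Y \<omega> > u}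
        \<le> prob {\<omega> \<in> space P. X \<omega> \<le> e * Y \<omega> \<and> Y \<omega> > 0}"
      by (intro finite_measure_mono) auto
    also have "\<dots> = ratio_mass e / ray_exponent e" by (rule prob_ratio_eq_0[OF \<open>e > 0\<close>])
    also have "\<dots> \<le> 1 / ray_exponent e"
      using ratio_mass_le_1 ray_exponent_pos[OF \<open>e > 0\<close>] by (intro divide_right_mono) auto
    also have "\<dots> \<le> e"
      using ray_exponent_ge[OF \<open>e > 0\<close>] ray_exponent_pos[OF \<open>e > 0\<close>] \<open>e > 0\<close>
      by (simp add: field_simps)
    finally show "prob {\<omega> \<in> space P. X \<omega> / Y \<omega> \<le> 0 \<and> Y \<omega> > u} \<le> 0 + e" by simp
  qed
  then show ?thesis using measure_nonneg[of P] by (meson antisym)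
qed

lemma ray_exponent_split:
  assumes "t > 0"
  shows "ray_exponent t = ratio_mass t + excess_mass t / t"
proof -
  let ?E = "space M - ratio_set t"
  have "ray_exponent t = (\<integral>s. indicator (ratio_set t) s * g s + indicator ?E s * f s / t \<partial>M)"
    unfolding ray_exponent_def
  proof (intro Bochner_Integration.integral_cong refl)
    fix s assume s: "s \<in> space M"
    show "max (f s / t) (g s) = indicator (ratio_set t) s * g s + indicator ?E s * f s / t"
    proof (cases "f s \<le> t * g s")
      case True
      then have "f s / t \<le> g s" using assms by (simp add: pos_divide_le_eq mult.commute)
      then show ?thesis using True s by (simp add: ratio_set_def indicator_def)
    next
      case False
      then have "f s / t > g s" using assms by (simp add: pos_less_divide_eq mult.commute)
      then show ?thesis using False s by (simp add: ratio_set_def indicator_def)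
    qed
  qed
  also have "\<dots> = ratio_mass t + excess_mass t / t"
  proof -
    have "integrable M (\<lambda>s. indicator ?E s * f s)"
      using integrable_real_mult_indicator[of ?E M f] integrable_f by (simp add: mult.commute)
    then show ?thesis
      unfolding ratio_mass_def excess_mass_def set_lebesgue_integral_def
      by (subst Bochner_Integration.integral_add) (auto intro: integrable_ratio_mass integrable_divide)
  qed
  finally show ?thesis .
qed

lemma prob_quotient_le:
  assumes "t \<ge> 0" "u \<ge> 0"
  shows "prob {\<omega> \<in> space P. X \<omega> / Y \<omega> \<le> t \<and> Y \<omega> > u} = ratio_rhs (ratio_mass t) (excess_mass t) t u"
proof (cases "t = 0")
  case True
  then show ?thesis using prob_quotient_nonpos[OF \<open>u \<ge> 0\<close>] by (simp add: ratio_rhs_def)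
next
  case False
  then have "t > 0" using assms by simp
  have event: "{\<omega> \<in> space P. X \<omega> / Y \<omega> \<le> t \<and> Y \<omega> > u} = {\<omega> \<in> space P. X \<omega> \<le> t * Y \<omega> \<and> Y \<omega> > u}"
    using \<open>u \<ge> 0\<close> by (auto simp: pos_divide_le_eq mult.commute)
  have "t * ratio_mass t + excess_mass t = t * ray_exponent t"
    using ray_exponent_split[OF \<open>t > 0\<close>] \<open>t > 0\<close> by (simp add: field_simps)
  then have ratio: "ratio_mass t / ray_exponent t = t * ratio_mass t / (t * ratio_mass t + excess_mass t)"
    using \<open>t > 0\<close> by simp
  show ?thesis
  proof (cases "u = 0")
    case True
    then show ?thesis using prob_ratio_eq_0[OF \<open>t > 0\<close>] event ratio by (simp add: ratio_rhs_def)
  next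
    case False
    then have "u > 0" using \<open>u \<ge> 0\<close> by simp
    then have "prob {\<omega> \<in> space P. X \<omega> / Y \<omega> \<le> t \<and> Y \<omega> > u}
        = ratio_mass t / ray_exponent t * (1 - exp (- ray_exponent t / u))"
      using prob_ratio_eq[OF \<open>t > 0\<close>] event by simp
    also have "\<dots> = t * ratio_mass t / (t * ratio_mass t + excess_mass t)
                     * (1 - exp (- (ratio_mass t + excess_mass t / t) / u))"
      by (subst ratio, subst ray_exponent_split[OF \<open>t > 0\<close>], rule refl)
    finally show ?thesis using \<open>t > 0\<close> \<open>u > 0\<close> by (simp add: ratio_rhs_def)
  qed
qed

lemma prob_quotient_gt_eq_0:
  assumes "t \<ge> 0" "emeasure M (space M - ratio_set t) = 0"
  shows "prob {\<omega> \<in> space P. X \<omega> / Y \<omega> > t} = 0"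
proof -
  have "AE s in M. s \<notin> space M - ratio_set t"
    using assms(2) by (intro AE_not_in) auto
  then have excess_0: "excess_mass t = 0"
    unfolding excess_mass_def set_lebesgue_integral_def
    by (intro integral_eq_zero_AE) (auto elim: AE_mp)
  have "t > 0"
  proof (rule ccontr)
    assume "\<not> t > 0"
    then have "ratio_set t = {s \<in> space M. f s = 0}"
      using assms(1) f_nonneg by (force simp: ratio_set_def)
    then have "excess_mass t = integral\<^sup>L M f"
      unfolding excess_mass_def set_lebesgue_integral_def
      by (intro Bochner_Integration.integral_cong refl) (auto simp: indicator_def)
    then show False using excess_0 integral_f by simp
  qed
  have "ray_exponent t = ratio_mass t" using ray_exponent_split[OF \<open>t > 0\<close>] excess_0 by simp
  then have "ratio_mass t > 0" using ray_exponent_pos[OF \<open>t > 0\<close>] by simp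
  then have "prob {\<omega> \<in> space P. X \<omega> / Y \<omega> \<le> t \<and> Y \<omega> > 0} = 1"
    using prob_quotient_le[OF assms(1) order_refl] excess_0 \<open>t > 0\<close> by (simp add: ratio_rhs_def)
  then have "prob (space P - {\<omega> \<in> space P. X \<omega> / Y \<omega> \<le> t \<and> Y \<omega> > 0}) = 0"
    by (subst prob_compl) auto
  moreover have "prob {\<omega> \<in> space P. X \<omega> / Y \<omega> > t}
      \<le> prob (space P - {\<omega> \<in> space P. X \<omega> / Y \<omega> \<le> t \<and> Y \<omega> > 0})"
    by (intro finite_measure_mono) auto
  ultimately show ?thesis using measure_nonneg[of P "{\<omega> \<in> space P. X \<omega> / Y \<omega> > t}"] by linarith
qed

end

theorem proposition1:
  fixes M :: "'s measure" and P :: "'w measure"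
    and f g :: "'s \<Rightarrow> real" and X Y :: "'w \<Rightarrow> real" and t u :: real
  assumes "sigma_finite_measure M"
    and "f \<in> borel_measurable M" and "g \<in> borel_measurable M"
    and "\<And>s. s \<in> space M \<Longrightarrow> f s \<ge> 0" and "\<And>s. s \<in> space M \<Longrightarrow> g s \<ge> 0"
    and "integrable M f" and "integrable M g"
    and "integral\<^sup>L M f = 1" and "integral\<^sup>L M g = 1"
    and "prob_space P"
    and "X \<in> borel_measurable P" and "Y \<in> borel_measurable P"
    and "\<And>x y. x > 0 \<Longrightarrow> y > 0 \<Longrightarrow>
           measure P {\<omega> \<in> space P. X \<omega> \<le> x \<and> Y \<omega> \<le> y}
             = exp (- (integral\<^sup>L M (\<lambda>s. max (f s / x) (g s / y))))"
    and "t \<ge> 0" and "u \<ge> 0"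
  defines "D \<equiv> {s \<in> space M. f s \<le> t * g s}"
  defines "E \<equiv> space M - D"
  shows "measure P {\<omega> \<in> space P. X \<omega> / Y \<omega> \<le> t \<and> Y \<omega> > u}
           = ratio_rhs (set_lebesgue_integral M D (\<lambda>s. \<bar>g s\<bar>))
                       (set_lebesgue_integral M E (\<lambda>s. \<bar>f s\<bar>)) t u
         \<and> (emeasure M E = 0 \<longrightarrow> measure P {\<omega> \<in> space P. X \<omega> / Y \<omega> > t} = 0)"
proof -
  interpret frechet_spectral M P f g X Y
    by (rule frechet_spectral.intro) (fact assms(2-13))+
  have D: "D = ratio_set t" by (simp add: D_def ratio_set_def)
  have "set_lebesgue_integral M D (\<lambda>s. \<bar>g s\<bar>) = ratio_mass t"
    unfolding D ratio_mass_def set_lebesgue_integral_def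
    by (intro Bochner_Integration.integral_cong) (auto simp: ratio_set_def g_nonneg)
  moreover have "set_lebesgue_integral M E (\<lambda>s. \<bar>f s\<bar>) = excess_mass t"
    unfolding E_def D excess_mass_def by (intro set_lebesgue_integral_cong) (auto simp: f_nonneg)
  ultimately show ?thesis
    using prob_quotient_le[OF \<open>t \<ge> 0\<close> \<open>u \<ge> 0\<close>] prob_quotient_gt_eq_0[OF \<open>t \<ge> 0\<close>]
    by (simp add: E_def D)
qed

end
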